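(* Let $\mathscr{X}$ be a commutative association scheme with splitting field $\mathbb{F}$, and let $\mathbb{K}_1$ and $\mathbb{K}_2$ be subfields of $\mathbb{F}$. If $\mathscr{X}$ satisfies Property $\mathsf{M}_{\mathbb{K}_1}$ and Property $\mathsf{M}_{\mathbb{K}_2}$, then $\mathscr{X}$ satisfies Property $\mathsf{M}_{\mathbb{K}_1\cap\mathbb{K}_2}$.
   Context: A (commutative) association scheme is a pair $(X,\mathcal{R})$ with $X$ a nonempty finite set and $\mathcal{R}=\{R_0,\ldots,R_d\}$ a partition of $X\times X$ such that $R_0$ is the identity relation, each transpose $R_i^\top$ is some $R_{i'}$, and there are numbers $p_{ij}^k=p_{ji}^k$ such that for every $(a,b)\in R_k$ the number of $c$ with $(a,c)\in R_i$, $(c,b)\in R_j$ is $p_{ij}^k$. Its adjacency matrices $A_0,\ldots,A_d$ are the $0/1$ matrices of the $R_i$; their complex span has a unique basis of primitive idempotents $E_0,\ldots,E_d$ ($E_iE_j=\delta_{ij}E_i$, $\sum_jE_j=I$). The splitting field is $\mathbb{Q}$ with all eigenvalues of $A_1,\ldots,A_d$ adjoined. For a field $\mathbb{K}\subseteq\mathbb{C}$, $\mathcal{E}_\mathbb{K}=\{\sum_{j=0}^d c_jE_j: c_j\in\{0,1\},\ \text{all entries in }\mathbb{K}\}$, and $\mathbb{K}[\mathcal{E}_\mathbb{K}]$ is its $\mathbb{K}$-span. The scheme has Property $\mathsf{M}_\mathbb{K}$ if $\mathbb{K}[\mathcal{E}_\mathbb{K}]$ is closed under Schur (entrywise) multiplication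 (equivalently, the complex span of $\mathcal{E}_\mathbb{K}$ is the Bose-Mesner algebra of a fusion scheme of $\mathscr{X}$). *)

theory Defs
  imports Complex_Main
begin

text \<open>Matrices indexed by the (finite, nonempty) point set X, modelled as the finite type 'x.\<close>
type_synonym 'x cmat = "'x \<Rightarrow> 'x \<Rightarrow> complex"

definition mmult :: "'x::finite cmat \<Rightarrow> 'x cmat \<Rightarrow> 'x cmat" where
  "mmult M N = (\<lambda>a b. \<Sum>c\<in>UNIV. M a c * N c b)"

definition idmat :: "'x cmat" where
  "idmat = (\<lambda>a b. if a = b then 1 else 0)"

definition schur :: "'x cmat \<Rightarrow> 'x cmat \<Rightarrow> 'x cmat" where
  "schur M N = (\<lambda>a b. M a b * N a b)"

definition smat :: "complex \<Rightarrow> 'x cmat \<Rightarrow> 'x cmat" where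
  "smat c M = (\<lambda>a b. c * M a b)"

text \<open>Relation R_i is {(a,b). rel a b = i}, for i = 0..d.\<close>
definition assoc_scheme :: "nat \<Rightarrow> ('x::finite \<Rightarrow> 'x \<Rightarrow> nat) \<Rightarrow> bool" where
  "assoc_scheme d rel \<longleftrightarrow>
     (\<forall>a b. rel a b \<le> d) \<and>
     (\<forall>i\<le>d. \<exists>a b. rel a b = i) \<and>
     (\<forall>a b. rel a b = 0 \<longleftrightarrow> a = b) \<and>
     (\<forall>i\<le>d. \<exists>i'\<le>d. \<forall>a b. rel b a = i \<longleftrightarrow> rel a b = i') \<and>
     (\<forall>i\<le>d. \<forall>j\<le>d. \<forall>k\<le>d. \<exists>p::nat. \<forall>a b. rel a b = k \<longrightarrow>
         card {c. rel a c = i \<and> rel c b = j} = p \<and>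
         card {c. rel a c = j \<and> rel c b = i} = p)"

definition adj :: "('x \<Rightarrow> 'x \<Rightarrow> nat) \<Rightarrow> nat \<Rightarrow> 'x cmat" where
  "adj rel i = (\<lambda>a b. if rel a b = i then 1 else 0)"

definition cspan_fam :: "nat \<Rightarrow> (nat \<Rightarrow> 'x cmat) \<Rightarrow> 'x cmat set" where
  "cspan_fam d F = {(\<lambda>a b. \<Sum>j\<le>d. c j * F j a b) | c. True}"

definition bose_mesner :: "nat \<Rightarrow> ('x \<Rightarrow> 'x \<Rightarrow> nat) \<Rightarrow> 'x cmat set" where
  "bose_mesner d rel = cspan_fam d (adj rel)"

definition prim_idempotents :: "nat \<Rightarrow> ('x::finite \<Rightarrow> 'x \<Rightarrow> nat) \<Rightarrow> (nat \<Rightarrow> 'x cmat) \<Rightarrow> bool" where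
  "prim_idempotents d rel E \<longleftrightarrow>
     cspan_fam d E = bose_mesner d rel \<and>
     (\<forall>c. (\<lambda>a b. \<Sum>j\<le>d. c j * E j a b) = (\<lambda>a b. 0) \<longrightarrow> (\<forall>j\<le>d. c j = 0)) \<and>
     (\<forall>i\<le>d. \<forall>j\<le>d. mmult (E i) (E j) = (if i = j then E i else (\<lambda>a b. 0))) \<and>
     (\<lambda>a b. \<Sum>j\<le>d. E j a b) = idmat"

definition subfield :: "complex set \<Rightarrow> bool" where
  "subfield K \<longleftrightarrow> 0 \<in> K \<and> 1 \<in> K \<and>
     (\<forall>x\<in>K. \<forall>y\<in>K. x + y \<in> K \<and> x - y \<in> K \<and> x * y \<in> K) \<and>
     (\<forall>x\<in>K. x \<noteq> 0 \<longrightarrow> inverse x \<in> K)"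

definition eigenvalue :: "'x::finite cmat \<Rightarrow> complex \<Rightarrow> bool" where
  "eigenvalue M lam \<longleftrightarrow> (\<exists>v::'x \<Rightarrow> complex. v \<noteq> (\<lambda>_. 0) \<and>
       (\<forall>a. (\<Sum>b\<in>UNIV. M a b * v b) = lam * v a))"

text \<open>Splitting field: Q with all eigenvalues of A_1,...,A_d adjoined (the smallest subfield
  of C containing them; every subfield of C contains Q).\<close>
definition splitting_field :: "nat \<Rightarrow> ('x::finite \<Rightarrow> 'x \<Rightarrow> nat) \<Rightarrow> complex set" where
  "splitting_field d rel = \<Inter> {K. subfield K \<and>
       (\<forall>i\<in>{1..d}. \<forall>lam. eigenvalue (adj rel i) lam \<longrightarrow> lam \<in> K)}"

definition E_K :: "nat \<Rightarrow> (nat \<Rightarrow> 'x cmat) \<Rightarrow> complex set \<Rightarrow> 'x cmat set" where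
  "E_K d E K = {M. \<exists>S. S \<subseteq> {..d} \<and> M = (\<lambda>a b. \<Sum>j\<in>S. E j a b) \<and> (\<forall>a b. M a b \<in> K)}"

definition K_span_E :: "nat \<Rightarrow> (nat \<Rightarrow> 'x cmat) \<Rightarrow> complex set \<Rightarrow> 'x cmat set" where
  "K_span_E d E K = {M. \<exists>T k. finite T \<and> T \<subseteq> E_K d E K \<and> (\<forall>N\<in>T. k N \<in> K) \<and>
       M = (\<lambda>a b. \<Sum>N\<in>T. k N * N a b)}"

text \<open>Property M_K (stated for the family of primitive idempotents, which is unique up to
  indexing; quantifying over all such families makes it a property of the scheme).\<close>
definition property_M :: "nat \<Rightarrow> ('x::finite \<Rightarrow> 'x \<Rightarrow> nat) \<Rightarrow> complex set \<Rightarrow> bool" where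
  "property_M d rel K \<longleftrightarrow> (\<forall>E. prim_idempotents d rel E \<longrightarrow>
     (\<forall>M\<in>K_span_E d E K. \<forall>N\<in>K_span_E d E K. schur M N \<in> K_span_E d E K))"

end

theory Submission
  imports Defs
begin

text \<open>Let K = K1 \<inter> K2 and let Z be the Schur product of two elements of K[E_K]. By
  Property M for K1 and K2, Z lies in K1[E_K1] and in K2[E_K2]. Hence its entries lie in K,
  and, the E_j being linearly independent, so do its eigenvalues z_j, the coefficients in
  Z = \<Sum> z_j E_j. For each eigenvalue c the idempotent \<Sum>{E_j | z_j = c} is the Lagrange
  polynomial \<Prod>{(Z - c' I)/(c - c') | c' \<noteq> c} in Z, so its entries lie in K and it belongs
  to E_K; therefore Z = \<Sum> c \<Sum>{E_j | z_j = c} lies in K[E_K].\<close>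

lemma subfield_Int: "subfield K1 \<Longrightarrow> subfield K2 \<Longrightarrow> subfield (K1 \<inter> K2)"
  by (simp add: subfield_def)

lemma
  assumes "subfield K"
  shows subfield_zero: "0 \<in> K" and subfield_one: "1 \<in> K"
    and subfield_diff: "x \<in> K \<Longrightarrow> y \<in> K \<Longrightarrow> x - y \<in> K"
    and subfield_add: "x \<in> K \<Longrightarrow> y \<in> K \<Longrightarrow> x + y \<in> K"
    and subfield_mult: "x \<in> K \<Longrightarrow> y \<in> K \<Longrightarrow> x * y \<in> K"
    and subfield_divide: "x \<in> K \<Longrightarrow> y \<in> K \<Longrightarrow> x / y \<in> K"
  using assms by (auto simp: subfield_def divide_inverse)

lemma subfield_sum:
  assumes "subfield K" "\<And>x. x \<in> A \<Longrightarrow> f x \<in> K"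
  shows "sum f A \<in> K"
  using assms(2)
  by (induction A rule: infinite_finite_induct) (auto intro: subfield_zero subfield_add assms(1))

lemma mmult_entries_in_subfield:
  assumes "subfield K" "\<And>a b. M a b \<in> K" "\<And>a b. N a b \<in> K"
  shows "mmult M N a b \<in> K"
  unfolding mmult_def using assms by (intro subfield_sum subfield_mult) auto

definition idem_comb :: "nat \<Rightarrow> (nat \<Rightarrow> 'x cmat) \<Rightarrow> (nat \<Rightarrow> complex) \<Rightarrow> 'x cmat" where
  "idem_comb d E z = (\<lambda>a b. \<Sum>j\<le>d. z j * E j a b)"

lemma idem_comb_cong: "(\<And>j. j \<le> d \<Longrightarrow> z j = z' j) \<Longrightarrow> idem_comb d E z = idem_comb d E z'"
  unfolding idem_comb_def by (intro ext sum.cong) auto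

lemma idem_comb_indicator:
  assumes "S \<subseteq> {..d}"
  shows "idem_comb d E (\<lambda>j. if j \<in> S then 1 else 0) = (\<lambda>a b. \<Sum>j\<in>S. E j a b)"
proof (intro ext)
  fix a b
  have "idem_comb d E (\<lambda>j. if j \<in> S then 1 else 0) a b = (\<Sum>j\<le>d. if j \<in> S then E j a b else 0)"
    unfolding idem_comb_def by (intro sum.cong) auto
  also have "\<dots> = (\<Sum>j\<in>S. E j a b)"
    using sum.inter_restrict[OF finite_atMost, of "\<lambda>j. E j a b" d S] assms
    by (simp add: Int_absorb1)
  finally show "idem_comb d E (\<lambda>j. if j \<in> S then 1 else 0) a b = (\<Sum>j\<in>S. E j a b)" .
qed

lemma sum_idem_comb:
  "(\<lambda>a b. \<Sum>N\<in>T. k N * idem_comb d E (f N) a b) = idem_comb d E (\<lambda>j. \<Sum>N\<in>T. k N * f N j)"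
proof (intro ext)
  fix a b
  have "(\<Sum>N\<in>T. k N * idem_comb d E (f N) a b) = (\<Sum>N\<in>T. \<Sum>j\<le>d. k N * f N j * E j a b)"
    unfolding idem_comb_def by (simp add: sum_distrib_left mult.assoc)
  also have "\<dots> = (\<Sum>j\<le>d. \<Sum>N\<in>T. k N * f N j * E j a b)"
    by (rule sum.swap)
  finally show "(\<Sum>N\<in>T. k N * idem_comb d E (f N) a b) =
      idem_comb d E (\<lambda>j. \<Sum>N\<in>T. k N * f N j) a b"
    unfolding idem_comb_def by (simp add: sum_distrib_right)
qed

lemma
  assumes "prim_idempotents d rel E"
  shows prim_idempotents_independent: "idem_comb d E z = (\<lambda>a b. 0) \<Longrightarrow> j \<le> d \<Longrightarrow> z j = 0"
    and prim_idempotents_orthogonal: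
      "i \<le> d \<Longrightarrow> j \<le> d \<Longrightarrow> mmult (E i) (E j) = (if i = j then E i else (\<lambda>a b. 0))"
    and idmat_eq_idem_comb: "idmat = idem_comb d E (\<lambda>_. 1)"
  using assms unfolding prim_idempotents_def idem_comb_def by simp_all

lemma idem_comb_unique:
  assumes "prim_idempotents d rel E" "idem_comb d E z = idem_comb d E z'" "j \<le> d"
  shows "z j = z' j"
proof -
  have "idem_comb d E (\<lambda>j. z j - z' j) = (\<lambda>a b. 0)"
    using assms(2) unfolding idem_comb_def
    by (intro ext) (simp add: left_diff_distrib sum_subtractf fun_eq_iff)
  from prim_idempotents_independent[OF assms(1) this assms(3)] show ?thesis
    by simp
qed

lemma mmult_idem_comb:
  assumes "prim_idempotents d rel E"
  shows "mmult (idem_comb d E f) (idem_comb d E g) = idem_comb d E (\<lambda>j. f j * g j)"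
proof (intro ext)
  fix a b
  have orth: "(\<Sum>c\<in>UNIV. E i a c * E j c b) = (if i = j then E i a b else 0)"
    if "i \<le> d" "j \<le> d" for i j
    using prim_idempotents_orthogonal[OF assms that] unfolding mmult_def
    by (simp add: fun_eq_iff split: if_splits)
  have "mmult (idem_comb d E f) (idem_comb d E g) a b =
      (\<Sum>c\<in>UNIV. \<Sum>i\<le>d. \<Sum>j\<le>d. f i * g j * (E i a c * E j c b))"
    unfolding mmult_def idem_comb_def sum_product by (intro sum.cong refl) (simp add: algebra_simps)
  also have "\<dots> = (\<Sum>i\<le>d. \<Sum>j\<le>d. \<Sum>c\<in>UNIV. f i * g j * (E i a c * E j c b))"
    by (subst sum.swap) (intro sum.cong refl; rule sum.swap)
  also have "\<dots> = (\<Sum>i\<le>d. \<Sum>j\<le>d. f i * g j * (\<Sum>c\<in>UNIV. E i a c * E j c b))"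
    by (simp add: sum_distrib_left)
  also have "\<dots> = (\<Sum>i\<le>d. \<Sum>j\<le>d. if i = j then f i * g i * E i a b else 0)"
    using orth by (intro sum.cong) auto
  also have "\<dots> = idem_comb d E (\<lambda>j. f j * g j) a b"
    unfolding idem_comb_def by simp
  finally show "mmult (idem_comb d E f) (idem_comb d E g) a b =
      idem_comb d E (\<lambda>j. f j * g j) a b" .
qed

lemma E_KI:
  "S \<subseteq> {..d} \<Longrightarrow> (\<And>a b. (\<Sum>j\<in>S. E j a b) \<in> K) \<Longrightarrow> (\<lambda>a b. \<Sum>j\<in>S. E j a b) \<in> E_K d E K"
  unfolding E_K_def by blast

lemma E_KE:
  assumes "N \<in> E_K d E K"
  obtains S where "S \<subseteq> {..d}" "N = (\<lambda>a b. \<Sum>j\<in>S. E j a b)" "\<And>a b. N a b \<in> K"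
  using assms unfolding E_K_def by blast

lemma K_span_EI:
  "finite T \<Longrightarrow> T \<subseteq> E_K d E K \<Longrightarrow> (\<And>N. N \<in> T \<Longrightarrow> k N \<in> K) \<Longrightarrow>
    (\<lambda>a b. \<Sum>N\<in>T. k N * N a b) \<in> K_span_E d E K"
  unfolding K_span_E_def by blast

lemma K_span_EE:
  assumes "M \<in> K_span_E d E K"
  obtains T k where "finite T" "T \<subseteq> E_K d E K" "\<And>N. N \<in> T \<Longrightarrow> k N \<in> K"
    "M = (\<lambda>a b. \<Sum>N\<in>T. k N * N a b)"
  using assms unfolding K_span_E_def by blast

lemma E_K_mono: "K \<subseteq> K' \<Longrightarrow> E_K d E K \<subseteq> E_K d E K'"
  by (blast elim: E_KE intro: E_KI)

lemma K_span_E_mono: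
  assumes "K \<subseteq> K'"
  shows "K_span_E d E K \<subseteq> K_span_E d E K'"
proof
  fix M
  assume "M \<in> K_span_E d E K"
  then obtain T k where "finite T" "T \<subseteq> E_K d E K" "\<And>N. N \<in> T \<Longrightarrow> k N \<in> K"
    and M: "M = (\<lambda>a b. \<Sum>N\<in>T. k N * N a b)"
    by (blast elim: K_span_EE)
  then show "M \<in> K_span_E d E K'"
    unfolding M using assms E_K_mono[OF assms, of d E] by (intro K_span_EI) auto
qed

lemma K_span_E_entries:
  assumes "subfield K" "M \<in> K_span_E d E K"
  shows "M a b \<in> K"
proof -
  obtain T k where T: "T \<subseteq> E_K d E K" "\<And>N. N \<in> T \<Longrightarrow> k N \<in> K"
    and M: "M = (\<lambda>a b. \<Sum>N\<in>T. k N * N a b)"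
    using assms(2) by (blast elim: K_span_EE)
  have "N a b \<in> K" if "N \<in> T" for N
    using that T(1) by (blast elim: E_KE)
  then show ?thesis
    unfolding M using T(2) by (auto intro!: subfield_sum subfield_mult assms(1))
qed

lemma K_span_E_coeffs:
  assumes "subfield K" "M \<in> K_span_E d E K"
  obtains z where "\<And>j. z j \<in> K" "M = idem_comb d E z"
proof -
  obtain T k where T: "T \<subseteq> E_K d E K" "\<And>N. N \<in> T \<Longrightarrow> k N \<in> K"
    and M: "M = (\<lambda>a b. \<Sum>N\<in>T. k N * N a b)"
    using assms(2) by (blast elim: K_span_EE)
  have "\<exists>S. S \<subseteq> {..d} \<and> N = (\<lambda>a b. \<Sum>j\<in>S. E j a b)" if "N \<in> T" for N
    using subsetD[OF T(1) that] by (elim E_KE) blast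
  then obtain S where S: "\<And>N. N \<in> T \<Longrightarrow> S N \<subseteq> {..d} \<and> N = (\<lambda>a b. \<Sum>j\<in>S N. E j a b)"
    by metis
  define ind where "ind N j = (if j \<in> S N then 1 else (0::complex))" for N j
  have "M = (\<lambda>a b. \<Sum>N\<in>T. k N * idem_comb d E (ind N) a b)"
    unfolding M ind_def using S by (intro ext sum.cong) (simp_all add: idem_comb_indicator)
  also have "\<dots> = idem_comb d E (\<lambda>j. \<Sum>N\<in>T. k N * ind N j)"
    by (rule sum_idem_comb)
  finally show ?thesis
    using T(2) by (intro that) (auto intro!: subfield_sum subfield_mult assms(1)
        simp: ind_def subfield_zero[OF assms(1)] subfield_one[OF assms(1)])
qed

lemma sum_in_K_span_E:
  assumes "subfield K" "finite V" "\<And>c. c \<in> V \<Longrightarrow> f c \<in> K" "\<And>c. c \<in> V \<Longrightarrow> g c \<in> E_K d E K"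
  shows "(\<lambda>a b. \<Sum>c\<in>V. f c * g c a b) \<in> K_span_E d E K"
proof -
  define k where "k N = (\<Sum>c\<in>{c\<in>V. g c = N}. f c)" for N
  have "(\<lambda>a b. \<Sum>c\<in>V. f c * g c a b) = (\<lambda>a b. \<Sum>N\<in>g ` V. k N * N a b)"
  proof (intro ext)
    fix a b
    have "(\<Sum>c\<in>V. f c * g c a b) = (\<Sum>N\<in>g ` V. \<Sum>c\<in>{c\<in>V. g c = N}. f c * g c a b)"
      by (rule sum.image_gen[OF assms(2)])
    also have "\<dots> = (\<Sum>N\<in>g ` V. k N * N a b)"
      unfolding k_def sum_distrib_right by (intro sum.cong) auto
    finally show "(\<Sum>c\<in>V. f c * g c a b) = (\<Sum>N\<in>g ` V. k N * N a b)" .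
  qed
  also have "\<dots> \<in> K_span_E d E K"
  proof (rule K_span_EI)
    show "finite (g ` V)" using assms(2) by simp
    show "g ` V \<subseteq> E_K d E K" using assms(4) by blast
    show "k N \<in> K" for N
      unfolding k_def using assms(3) by (intro subfield_sum[OF assms(1)]) blast
  qed
  finally show ?thesis .
qed

lemma prod_list_lagrange_basis:
  fixes c x :: "'a::field"
  assumes "set cs = V - {c}" "x \<in> V"
  shows "prod_list (map (\<lambda>c'. (x - c') / (c - c')) cs) = (if x = c then 1 else 0)"
proof (cases "x = c")
  case True
  have "map (\<lambda>c'. (x - c') / (c - c')) cs = map (\<lambda>_. 1) cs"
    using True assms(1) by (intro map_cong) auto
  then show ?thesis
    using True by (simp add: map_replicate_const)
next
  case False
  then have "x \<in> set cs" using assms by blast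
  then show ?thesis using False by (auto simp: prod_list_zero_iff)
qed

fun lagrange_mat :: "'x::finite cmat \<Rightarrow> complex \<Rightarrow> complex list \<Rightarrow> 'x cmat" where
  "lagrange_mat Z c [] = idmat"
| "lagrange_mat Z c (c' # cs) =
     mmult (\<lambda>a b. (Z a b - c' * idmat a b) / (c - c')) (lagrange_mat Z c cs)"

lemma lagrange_mat_entries:
  assumes "subfield K" "\<And>a b. Z a b \<in> K" "c \<in> K" "set cs \<subseteq> K"
  shows "lagrange_mat Z c cs a b \<in> K"
  using assms(4)
proof (induction cs arbitrary: a b)
  case Nil
  then show ?case by (simp add: idmat_def subfield_zero subfield_one assms(1))
next
  case (Cons c' cs)
  have "(Z a b - c' * idmat a b) / (c - c') \<in> K" for a b
    using Cons.prems assms(1-3) unfolding idmat_def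
    by (intro subfield_divide subfield_diff subfield_mult) (auto intro: subfield_zero subfield_one)
  moreover have "lagrange_mat Z c cs a b \<in> K" for a b
    using Cons by simp
  ultimately show ?case
    unfolding lagrange_mat.simps by (rule mmult_entries_in_subfield[OF assms(1)])
qed

lemma lagrange_mat_idem_comb:
  assumes "prim_idempotents d rel E"
  shows "lagrange_mat (idem_comb d E z) c cs =
    idem_comb d E (\<lambda>j. prod_list (map (\<lambda>c'. (z j - c') / (c - c')) cs))"
proof (induction cs)
  case Nil
  then show ?case using idmat_eq_idem_comb[OF assms] by simp
next
  case (Cons c' cs)
  have "(\<lambda>a b. (idem_comb d E z a b - c' * idmat a b) / (c - c')) =
      idem_comb d E (\<lambda>j. (z j - c') / (c - c'))"
  proof (intro ext)
    fix a b
    have "(idem_comb d E z a b - c' * idmat a b) / (c - c') =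
        (\<Sum>j\<le>d. (z j * E j a b - c' * E j a b) / (c - c'))"
      unfolding idmat_eq_idem_comb[OF assms] idem_comb_def
      by (simp add: sum_divide_distrib[symmetric] sum_subtractf sum_distrib_left)
    also have "\<dots> = idem_comb d E (\<lambda>j. (z j - c') / (c - c')) a b"
      unfolding idem_comb_def by (intro sum.cong refl) (simp add: field_simps)
    finally show "(idem_comb d E z a b - c' * idmat a b) / (c - c') = \<dots>" .
  qed
  then show ?case using Cons mmult_idem_comb[OF assms] by simp
qed

lemma eigenprojection_in_E_K:
  assumes "prim_idempotents d rel E" "subfield K" "\<And>j. j \<le> d \<Longrightarrow> z j \<in> K"
    and "\<And>a b. idem_comb d E z a b \<in> K" "c \<in> z ` {..d}"
  shows "(\<lambda>a b. \<Sum>j\<in>{j\<in>{..d}. z j = c}. E j a b) \<in> E_K d E K"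
proof (rule E_KI)
  obtain cs where cs: "set cs = z ` {..d} - {c}"
    using finite_list[OF finite_Diff[OF finite_imageI[OF finite_atMost]]] by metis
  have "lagrange_mat (idem_comb d E z) c cs =
      idem_comb d E (\<lambda>j. if j \<in> {j\<in>{..d}. z j = c} then 1 else 0)"
    unfolding lagrange_mat_idem_comb[OF assms(1)]
  proof (rule idem_comb_cong)
    fix j
    assume "j \<le> d"
    then show "prod_list (map (\<lambda>c'. (z j - c') / (c - c')) cs) =
        (if j \<in> {j\<in>{..d}. z j = c} then 1 else 0)"
      using prod_list_lagrange_basis[OF cs, of "z j"] by simp
  qed
  also have "\<dots> = (\<lambda>a b. \<Sum>j\<in>{j\<in>{..d}. z j = c}. E j a b)"
    by (rule idem_comb_indicator) blast
  finally have eq: "lagrange_mat (idem_comb d E z) c cs = (\<lambda>a b. \<Sum>j\<in>{j\<in>{..d}. z j = c}. E j a b)" .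
  have "c \<in> K" "set cs \<subseteq> K"
    using assms(3,5) cs by auto
  with assms(2,4) have "lagrange_mat (idem_comb d E z) c cs a b \<in> K" for a b
    by (intro lagrange_mat_entries)
  then show "(\<Sum>j\<in>{j\<in>{..d}. z j = c}. E j a b) \<in> K" for a b
    by (simp add: eq)
qed blast

lemma idem_comb_in_K_span_E:
  assumes "prim_idempotents d rel E" "subfield K" "\<And>j. j \<le> d \<Longrightarrow> z j \<in> K"
    and "\<And>a b. idem_comb d E z a b \<in> K"
  shows "idem_comb d E z \<in> K_span_E d E K"
proof -
  have "idem_comb d E z = (\<lambda>a b. \<Sum>c\<in>z ` {..d}. c * (\<Sum>j\<in>{j\<in>{..d}. z j = c}. E j a b))"
  proof (intro ext)
    fix a b
    have "idem_comb d E z a b = (\<Sum>c\<in>z ` {..d}. \<Sum>j\<in>{j\<in>{..d}. z j = c}. z j * E j a b)"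
      unfolding idem_comb_def by (rule sum.image_gen[OF finite_atMost])
    also have "\<dots> = (\<Sum>c\<in>z ` {..d}. c * (\<Sum>j\<in>{j\<in>{..d}. z j = c}. E j a b))"
      unfolding sum_distrib_left by (intro sum.cong) auto
    finally show "idem_comb d E z a b = \<dots>" .
  qed
  also have "\<dots> \<in> K_span_E d E K"
  proof (rule sum_in_K_span_E[OF assms(2) finite_imageI[OF finite_atMost], where f = "\<lambda>c. c"
        and g = "\<lambda>c a b. \<Sum>j\<in>{j\<in>{..d}. z j = c}. E j a b"])
    fix c
    assume c: "c \<in> z ` {..d}"
    then show "c \<in> K" using assms(3) by blast
    show "(\<lambda>a b. \<Sum>j\<in>{j\<in>{..d}. z j = c}. E j a b) \<in> E_K d E K"
      by (rule eigenprojection_in_E_K[OF assms c])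
  qed
  finally show ?thesis .
qed

lemma K_span_E_Int:
  assumes E: "prim_idempotents d rel E" and "subfield K1" "subfield K2"
    and Z1: "Z \<in> K_span_E d E K1" and Z2: "Z \<in> K_span_E d E K2"
  shows "Z \<in> K_span_E d E (K1 \<inter> K2)"
proof -
  obtain z1 where z1_in: "\<And>j. z1 j \<in> K1" and z1: "Z = idem_comb d E z1"
    using K_span_E_coeffs[OF assms(2) Z1] by blast
  obtain z2 where z2_in: "\<And>j. z2 j \<in> K2" and z2: "Z = idem_comb d E z2"
    using K_span_E_coeffs[OF assms(3) Z2] by blast
  have "idem_comb d E z1 = idem_comb d E z2"
    using z1 z2 by simp
  then have "z1 j \<in> K1 \<inter> K2" if "j \<le> d" for j
    using idem_comb_unique[OF E _ that] z1_in[of j] z2_in[of j] by (metis IntI)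
  moreover have "idem_comb d E z1 a b \<in> K1 \<inter> K2" for a b
    unfolding z1[symmetric]
    using K_span_E_entries[OF assms(2) Z1] K_span_E_entries[OF assms(3) Z2] by blast
  ultimately show ?thesis
    unfolding z1 by (rule idem_comb_in_K_span_E[OF E subfield_Int[OF assms(2,3)]])
qed

lemma property_MD:
  "property_M d rel K \<Longrightarrow> prim_idempotents d rel E \<Longrightarrow> M \<in> K_span_E d E K \<Longrightarrow>
    N \<in> K_span_E d E K \<Longrightarrow> schur M N \<in> K_span_E d E K"
  unfolding property_M_def by blast

theorem proposition3p10:
  fixes d :: nat and rel :: "'x::finite \<Rightarrow> 'x \<Rightarrow> nat" and K1 K2 :: "complex set"
  assumes "assoc_scheme d rel"
    and "subfield K1" and "K1 \<subseteq> splitting_field d rel"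
    and "subfield K2" and "K2 \<subseteq> splitting_field d rel"
    and "property_M d rel K1" and "property_M d rel K2"
  shows "property_M d rel (K1 \<inter> K2)"
  unfolding property_M_def
proof (intro allI impI ballI)
  fix E M N
  assume E: "prim_idempotents d rel E"
    and M: "M \<in> K_span_E d E (K1 \<inter> K2)" and N: "N \<in> K_span_E d E (K1 \<inter> K2)"
  have "schur M N \<in> K_span_E d E K1"
    using M N K_span_E_mono[of "K1 \<inter> K2" K1] by (intro property_MD[OF assms(6) E]) auto
  moreover have "schur M N \<in> K_span_E d E K2"
    using M N K_span_E_mono[of "K1 \<inter> K2" K2] by (intro property_MD[OF assms(7) E]) auto
  ultimately show "schur M N \<in> K_span_E d E (K1 \<inter> K2)"
    by (rule K_span_E_Int[OF E assms(2,4)])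
qed

end
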